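(* Let $E$ be an $r$-round block cipher with block size $n$, and let $F:\mathbb{F}_2^n\times\mathbb{F}_2^m\to\mathbb{F}_2^n$, $F(x,k)=F_k(x)$, be its reduced version consisting of the first $r-1$ rounds, where $k$ ranges over the key space $\mathcal{K}=\mathbb{F}_2^m$ of these rounds. Run Algorithm 2 (described in the context) on $F$ with a polynomial $q(n)$ and a constant $\sigma\in(0,1)$. If Algorithm 2 outputs a truncated differential $(a,b)$, then, except with probability negligible in $n$, there exists a subset $\mathcal{K}'\subseteq\mathcal{K}$ with $|\mathcal{K}'|/|\mathcal{K}|>1-\frac{1}{q(n)}$ such that for every $k\in\mathcal{K}'$, $$\frac{\big|\{x\in\mathbb{F}_2^n : F_k(x\oplus a)\oplus F_k(x)\text{ matches } b\}\big|}{2^n}>1-\sigma .$$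
   Context: Notation: $\oplus$ is bitwise XOR, $+$ is addition in $\mathbb{F}_2$, $u\cdot w$ is the standard inner product over $\mathbb{F}_2$. Write $F=(F_1,\dots,F_n)$ with component Boolean functions $F_j:\mathbb{F}_2^{n+m}\to\mathbb{F}_2$ (input $z=(x,k)$). Walsh spectrum: for $f:\mathbb{F}_2^N\to\mathbb{F}_2$, $S_f(\omega)=2^{-N}\sum_{x\in\mathbb{F}_2^N}(-1)^{f(x)+\omega\cdot x}$. Running the Bernstein–Vazirani (BV) algorithm on $f$ (implemented by the attacker's own quantum circuit) returns a vector $\omega\in\mathbb{F}_2^N$ with probability $S_f(\omega)^2$; distinct runs are independent. Truncated differential: a pair $(a,b)$ with $a\in\mathbb{F}_2^n$ and $b=(b_1,\dots,b_n)\in\{0,1,\times\}^n$; positions $j$ with $b_j\ne\times$ are "predicted". A vector $d\in\mathbb{F}_2^n$ matches $b$ if $d_j=b_j$ for every predicted position $j$. Algorithm 2 (parameters: polynomial $q(n)$, constant $\sigma$; set $p(n)=\frac{1}{2\sigma^2}q(n)^2n^3$): 1. For each $j=1,\dots,n$: run BV on $F_j$ independently $p(n)$ times, obtaining $\omega\in\mathbb{F}_2^{n+m}$; let $H_j$ be the set of truncations $(\omega_1,\dots,\omega_n)$ of these outputs. For $i\in\{0,1\}$ let $A_j^i=\{x\in\mathbb{F}_2^n : x\cdot\omega=i\ \forall\omega\in H_j\}$ and $A_j=A_j^0\cup A_j^1$. 2. For $t=n,n-1,\dots,1$: if $2^t(1-\sigma)\le 1$, output "No" and stop. Otherwise, if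 there are distinct indices $j_1,\dots,j_t$ with $A_{j_1}\cap\dots\cap A_{j_t}\supsetneq\{\mathbf 0\}$, choose any nonzero $a$ in this intersection, set $b_j=i_j$ for $j\in\{j_1,\dots,j_t\}$, where $i_j$ is such that $a\in A_j^{i_j}$, and $b_j=\times$ otherwise; output $(a,b)$ and stop. If the loop ends, output "No". A probability is negligible in $n$ if it is bounded by a function of $n$ that is eventually smaller than $1/\mathrm{poly}(n)$ for every polynomial; probabilities are over the randomness of the BV measurements. *)

theory Defs
  imports "HOL-Probability.Probability" "HOL-Computational_Algebra.Polynomial"
begin

text \<open>Vectors of F_2^N are boolean lists of length N; True = 1.\<close>

definition vecs :: "nat \<Rightarrow> bool list set" where
  "vecs N = {xs. length xs = N}"

definition bxor :: "bool list \<Rightarrow> bool list \<Rightarrow> bool list" where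
  "bxor u w = map2 (\<noteq>) u w"

definition ip :: "bool list \<Rightarrow> bool list \<Rightarrow> bool" where
  "ip u w = odd (card {i. i < length u \<and> i < length w \<and> u ! i \<and> w ! i})"

definition walsh :: "nat \<Rightarrow> (bool list \<Rightarrow> bool) \<Rightarrow> bool list \<Rightarrow> real" where
  "walsh N f \<omega> = (\<Sum>x\<in>vecs N. (if f x \<noteq> ip \<omega> x then -1 else 1)) / 2 ^ N"

text \<open>Output distribution of one Bernstein-Vazirani run on f : F_2^N -> F_2.\<close>
definition BV :: "nat \<Rightarrow> (bool list \<Rightarrow> bool) \<Rightarrow> bool list pmf" where
  "BV N f = embed_pmf (\<lambda>\<omega>. if length \<omega> = N then (walsh N f \<omega>)\<^sup>2 else 0)"

text \<open>Component function F_j (j = 0..n-1) of F as a Boolean function of z = (x,k).\<close>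
definition comp :: "nat \<Rightarrow> (bool list \<Rightarrow> bool list \<Rightarrow> bool list) \<Rightarrow> nat \<Rightarrow> bool list \<Rightarrow> bool" where
  "comp n F j z = F (take n z) (drop n z) ! j"

text \<open>Truncated differential pattern: None stands for the symbol \<times>.\<close>
definition matches :: "bool list \<Rightarrow> bool option list \<Rightarrow> bool" where
  "matches d b = (\<forall>j < length b. \<forall>c. b ! j = Some c \<longrightarrow> d ! j = c)"

definition nruns :: "real \<Rightarrow> real \<Rightarrow> nat \<Rightarrow> nat" where
  "nruns qn \<sigma> n = nat \<lceil>qn\<^sup>2 * real n ^ 3 / (2 * \<sigma>\<^sup>2)\<rceil>"

text \<open>Sets built in step 1 from the sample table \<omega>, indexed by (j,t).\<close>
definition Hset :: "nat \<Rightarrow> nat \<Rightarrow> (nat \<times> nat \<Rightarrow> bool list) \<Rightarrow> nat \<Rightarrow> bool list set" where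
  "Hset n p \<omega> j = {take n (\<omega> (j, t)) | t. t < p}"

definition Aset :: "nat \<Rightarrow> bool list set \<Rightarrow> bool \<Rightarrow> bool list set" where
  "Aset n H i = {x \<in> vecs n. \<forall>w\<in>H. ip x w = i}"

text \<open>All possible outputs (a,b) of step 2 at level t (over all admissible choices).\<close>
definition cands :: "nat \<Rightarrow> (nat \<Rightarrow> bool list set) \<Rightarrow> nat \<Rightarrow> (bool list \<times> bool option list) set" where
  "cands n H t = {(a, b). \<exists>J. J \<subseteq> {..<n} \<and> card J = t \<and> a \<in> vecs n \<and> a \<noteq> replicate n False
      \<and> (\<forall>j\<in>J. a \<in> Aset n (H j) False \<union> Aset n (H j) True)
      \<and> length b = n
      \<and> (\<forall>j<n. (j \<notin> J \<longrightarrow> b ! j = None) \<and> (j \<in> J \<longrightarrow> (\<exists>i. b ! j = Some i \<and> a \<in> Aset n (H j) i)))}"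

text \<open>Output of Algorithm 2 (None = "No"); sel resolves the "choose any" step.\<close>
definition alg2 :: "nat \<Rightarrow> real \<Rightarrow> (nat \<Rightarrow> nat \<Rightarrow> (bool list \<times> bool option list) set \<Rightarrow> bool list \<times> bool option list)
   \<Rightarrow> (nat \<Rightarrow> bool list set) \<Rightarrow> (bool list \<times> bool option list) option" where
  "alg2 n \<sigma> sel H =
     (let T = {t \<in> {1..n}. 2 ^ t * (1 - \<sigma>) > (1::real) \<and> cands n H t \<noteq> {}}
      in if T = {} then None else Some (sel n (Max T) (cands n H (Max T))))"

definition good_td :: "nat \<Rightarrow> nat \<Rightarrow> (bool list \<Rightarrow> bool list \<Rightarrow> bool list) \<Rightarrow> real \<Rightarrow> real
    \<Rightarrow> bool list \<Rightarrow> bool option list \<Rightarrow> bool" where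
  "good_td n m F qn \<sigma> a b =
     (\<exists>K' \<subseteq> vecs m. real (card K') / real (card (vecs m)) > 1 - 1 / qn \<and>
        (\<forall>k\<in>K'. real (card {x \<in> vecs n. matches (bxor (F (bxor x a) k) (F x k)) b}) / 2 ^ n > 1 - \<sigma>))"

definition negligible :: "(nat \<Rightarrow> real) \<Rightarrow> bool" where
  "negligible f = (\<forall>c::nat. \<forall>\<^sub>F n in sequentially. \<bar>f n\<bar> < 1 / real n ^ c)"

end

theory Submission
  imports Defs "HOL-Real_Asymp.Real_Asymp"
begin

text \<open>
  By the Wiener--Khinchin identity, a BV sample \<omega> of a Boolean function f satisfies
  \<omega> \<cdot> \<alpha> = 1 with probability exactly Pr_z[f(z \<oplus> \<alpha>) \<noteq> f(z)]. Padding a with zeros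
  on the key part, a pair (j, i) survives all p(n) BV runs on F_j for the difference a with
  probability (1 - \<delta>)^p, where \<delta> is the probability over (x, k) that bit j of
  F_k(x \<oplus> a) \<oplus> F_k(x) differs from i. With \<epsilon> = \<sigma>/(n q) and p(n) as chosen,
  (1 - \<epsilon>)^p \<le> exp(-n^2/2), so a union bound over the 2 n 2^n triples (j, a, i) shows
  that, except with negligible probability, every predicted bit of the output has \<delta> < \<epsilon>.
  Then a union bound over the at most n predicted bits gives an average (over keys) failure
  fraction below \<sigma>/q, and Markov's inequality over the keys yields the key set K'.
\<close>

lemma ip_Nil1 [simp]: "ip [] w = False"
  by (simp add: ip_def)

lemma ip_Nil2 [simp]: "ip u [] = False"
  by (simp add: ip_def)

lemma ip_Cons [simp]: "ip (u # us) (w # ws) = ((u \<and> w) \<noteq> ip us ws)"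
proof -
  let ?S = "{i. i < length us \<and> i < length ws \<and> us ! i \<and> ws ! i}"
  have "{i. i < length (u # us) \<and> i < length (w # ws) \<and> (u # us) ! i \<and> (w # ws) ! i}
        = (if u \<and> w then {0} else {}) \<union> Suc ` ?S"
  proof (rule set_eqI)
    fix i
    show "i \<in> {i. i < length (u # us) \<and> i < length (w # ws) \<and> (u # us) ! i \<and> (w # ws) ! i}
        \<longleftrightarrow> i \<in> (if u \<and> w then {0} else {}) \<union> Suc ` ?S"
      by (cases i) (auto simp: image_iff)
  qed
  moreover have "card (Suc ` ?S) = card ?S"
    by (simp add: card_image)
  ultimately show ?thesis
    by (auto simp: ip_def card_insert_if)
qed

lemma ip_commute: "ip u w = ip w u"
  unfolding ip_def by (metis (no_types, lifting) Collect_cong)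

lemma ip_replicate_False [simp]: "ip (replicate m False) w = False"
proof (induction w arbitrary: m)
  case (Cons c w)
  then show ?case by (cases m) auto
qed simp

lemma ip_take_eq_ip_pad:
  "length a = n \<Longrightarrow> length \<omega> = n + m \<Longrightarrow> ip a (take n \<omega>) = ip \<omega> (a @ replicate m False)"
proof (induction a arbitrary: n \<omega>)
  case Nil
  then show ?case by (simp add: ip_commute[of \<omega>])
next
  case (Cons x a)
  then obtain n' c \<omega>' where "n = Suc n'" "\<omega> = c # \<omega>'"
    by (cases n; cases \<omega>) auto
  with Cons show ?case by auto
qed

lemma length_bxor [simp]: "length (bxor u v) = min (length u) (length v)"
  by (simp add: bxor_def)

lemma bxor_Nil [simp]: "bxor [] v = []" "bxor u [] = []"
  by (simp_all add: bxor_def)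

lemma bxor_Cons [simp]: "bxor (a # u) (b # v) = (a \<noteq> b) # bxor u v"
  by (simp add: bxor_def)

lemma nth_bxor: "i < length u \<Longrightarrow> i < length v \<Longrightarrow> bxor u v ! i = (u ! i \<noteq> v ! i)"
  by (simp add: bxor_def)

lemma bxor_replicate_False: "length k = N \<Longrightarrow> bxor k (replicate N False) = k"
  by (induction k arbitrary: N) (auto simp: Suc_length_conv)

lemma bxor_append_pad:
  "length x = length a \<Longrightarrow> length k = m \<Longrightarrow> bxor (x @ k) (a @ replicate m False) = bxor x a @ k"
  by (induction x a rule: list_induct2) (simp_all add: bxor_replicate_False)

lemma ip_bxor:
  "length y = length z \<Longrightarrow> ip w (bxor y z) = (ip w y \<noteq> ip w z)"
proof (induction y z arbitrary: w rule: list_induct2)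
  case (Cons b y c z)
  then show ?case
    by (cases w) auto
qed simp

lemma mem_vecs_iff [simp]: "x \<in> vecs N \<longleftrightarrow> length x = N"
  by (simp add: vecs_def)

lemma vecs_0: "vecs 0 = {[]}"
  by (auto simp: vecs_def)

lemma vecs_Suc: "vecs (Suc N) = Cons True ` vecs N \<union> Cons False ` vecs N"
  by (auto simp: vecs_def length_Suc_conv)

lemma finite_vecs [simp]: "finite (vecs N)"
  by (induction N) (simp_all add: vecs_0 vecs_Suc)

lemma card_vecs: "card (vecs N) = 2 ^ N"
proof (induction N)
  case 0
  then show ?case by (simp add: vecs_0)
next
  case (Suc N)
  have "card (vecs (Suc N)) = card (Cons True ` vecs N) + card (Cons False ` vecs N)"
    unfolding vecs_Suc by (rule card_Un_disjoint) auto
  with Suc show ?case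
    by (simp add: card_image)
qed

lemma sum_vecs_Suc:
  "(\<Sum>x\<in>vecs (Suc N). g x) = (\<Sum>x\<in>vecs N. g (True # x)) + (\<Sum>x\<in>vecs N. g (False # x))"
  unfolding vecs_Suc by (subst sum.union_disjoint) (auto simp: sum.reindex)

lemma vecs_append_bij: "bij_betw (\<lambda>(x, k). x @ k) (vecs n \<times> vecs m) (vecs (n + m))"
proof (rule bij_betw_imageI)
  show "inj_on (\<lambda>(x, k). x @ k) (vecs n \<times> vecs m)"
    by (auto simp: inj_on_def append_eq_append_conv)
  show "(\<lambda>(x, k). x @ k) ` (vecs n \<times> vecs m) = vecs (n + m)"
  proof (intro subset_antisym subsetI)
    fix z assume "z \<in> vecs (n + m)"
    then show "z \<in> (\<lambda>(x, k). x @ k) ` (vecs n \<times> vecs m)"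
      by (intro image_eqI[of _ _ "(take n z, drop n z)"]) auto
  qed auto
qed

lemma sum_vecs_append:
  "(\<Sum>z\<in>vecs (n + m). g z) = (\<Sum>k\<in>vecs m. \<Sum>x\<in>vecs n. g (x @ k))"
proof -
  have "(\<Sum>z\<in>vecs (n + m). g z) = (\<Sum>(x, k)\<in>vecs n \<times> vecs m. g (x @ k))"
    using sum.reindex_bij_betw[OF vecs_append_bij, of g] by (simp add: case_prod_unfold)
  also have "\<dots> = (\<Sum>x\<in>vecs n. \<Sum>k\<in>vecs m. g (x @ k))"
    by (rule sum.cartesian_product[symmetric])
  also have "\<dots> = (\<Sum>k\<in>vecs m. \<Sum>x\<in>vecs n. g (x @ k))"
    by (rule sum.swap)
  finally show ?thesis .
qed

lemma card_vecs_append: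
  "card {z\<in>vecs (n + m). P z} = (\<Sum>k\<in>vecs m. card {x\<in>vecs n. P (x @ k)})"
proof -
  have count: "card {x\<in>A. Q x} = (\<Sum>x\<in>A. if Q x then 1 else 0)" if "finite A" for A and Q :: "bool list \<Rightarrow> bool"
    using that by (simp add: sum.If_cases Int_def conj_commute)
  show ?thesis
    unfolding count[OF finite_vecs] by (rule sum_vecs_append)
qed

definition neg_one_pow :: "bool \<Rightarrow> real" where
  "neg_one_pow b = (if b then -1 else 1)"

lemma neg_one_pow_xor: "neg_one_pow (a \<noteq> b) = neg_one_pow a * neg_one_pow b"
  by (simp add: neg_one_pow_def)

lemma bxor_eq_replicate_False_iff:
  "length y = N \<Longrightarrow> length c = N \<Longrightarrow> bxor y c = replicate N False \<longleftrightarrow> y = c"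
proof (induction y arbitrary: c N)
  case (Cons b y)
  then show ?case
    by (cases c; cases N) auto
qed simp

lemma sum_character:
  "length y = N \<Longrightarrow>
     (\<Sum>\<omega>\<in>vecs N. neg_one_pow (ip \<omega> y)) = (if y = replicate N False then 2 ^ N else 0)"
proof (induction N arbitrary: y)
  case 0
  then show ?case by (simp add: card_vecs neg_one_pow_def)
next
  case (Suc N)
  then obtain c ys where y: "y = c # ys" "length ys = N"
    by (cases y) auto
  show ?case
  proof (cases c)
    case True
    then have "(\<Sum>\<omega>\<in>vecs (Suc N). neg_one_pow (ip \<omega> y))
        = (\<Sum>x\<in>vecs N. neg_one_pow (\<not> ip x ys) + neg_one_pow (ip x ys))"
      by (simp add: sum_vecs_Suc y sum.distrib)
    also have "\<dots> = 0"
      by (rule sum.neutral) (simp add: neg_one_pow_def)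
    finally show ?thesis
      using True y by simp
  next
    case False
    with Suc.IH[OF y(2)] y show ?thesis
      by (simp add: sum_vecs_Suc)
  qed
qed

lemma walsh_eq_sum: "walsh N f \<omega> = (\<Sum>x\<in>vecs N. neg_one_pow (f x) * neg_one_pow (ip \<omega> x)) / 2 ^ N"
  unfolding walsh_def by (intro arg_cong[where f="\<lambda>s. s / 2 ^ N"] sum.cong) (auto simp: neg_one_pow_def)

lemma walsh_autocorrelation:
  assumes a: "a \<in> vecs N"
  shows "(\<Sum>\<omega>\<in>vecs N. (walsh N f \<omega>)\<^sup>2 * neg_one_pow (ip \<omega> a))
       = (\<Sum>x\<in>vecs N. neg_one_pow (f (bxor x a) \<noteq> f x)) / 2 ^ N"
proof -
  let ?V = "vecs N" and ?\<chi> = "\<lambda>\<omega> x. neg_one_pow (ip \<omega> x)"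
  define g where "g x = neg_one_pow (f x)" for x
  have \<chi>_mult: "?\<chi> \<omega> x * ?\<chi> \<omega> y * ?\<chi> \<omega> a = ?\<chi> \<omega> (bxor y (bxor x a))"
    if "x \<in> ?V" "y \<in> ?V" for \<omega> x y
    using that a by (simp add: ip_bxor neg_one_pow_def)
  have collapse: "(\<Sum>y\<in>?V. g y * (\<Sum>\<omega>\<in>?V. ?\<chi> \<omega> (bxor y (bxor x a)))) = 2 ^ N * g (bxor x a)"
    if "x \<in> ?V" for x
  proof -
    have "(\<Sum>y\<in>?V. g y * (\<Sum>\<omega>\<in>?V. ?\<chi> \<omega> (bxor y (bxor x a))))
        = (\<Sum>y\<in>?V. if y = bxor x a then 2 ^ N * g y else 0)"
      using that a by (intro sum.cong refl) (simp add: sum_character bxor_eq_replicate_False_iff)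
    also have "\<dots> = 2 ^ N * g (bxor x a)"
      using that a by simp
    finally show ?thesis .
  qed
  have "(\<Sum>\<omega>\<in>?V. (walsh N f \<omega>)\<^sup>2 * ?\<chi> \<omega> a)
      = (\<Sum>\<omega>\<in>?V. \<Sum>x\<in>?V. \<Sum>y\<in>?V. g x * g y * (?\<chi> \<omega> x * ?\<chi> \<omega> y * ?\<chi> \<omega> a)) / (2 ^ N * 2 ^ N)"
    unfolding walsh_eq_sum power2_eq_square g_def
    by (simp add: sum_divide_distrib[symmetric] sum_distrib_left sum_distrib_right mult_ac)
  also have "\<dots> = (\<Sum>x\<in>?V. \<Sum>y\<in>?V. \<Sum>\<omega>\<in>?V. g x * g y * (?\<chi> \<omega> x * ?\<chi> \<omega> y * ?\<chi> \<omega> a)) / (2 ^ N * 2 ^ N)"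
    by (subst sum.swap) (rule arg_cong[where f="\<lambda>s. s / _"], rule sum.cong[OF refl], rule sum.swap)
  also have "\<dots> = (\<Sum>x\<in>?V. \<Sum>y\<in>?V. \<Sum>\<omega>\<in>?V. g x * g y * ?\<chi> \<omega> (bxor y (bxor x a))) / (2 ^ N * 2 ^ N)"
    by (intro arg_cong[where f="\<lambda>s. s / _"] sum.cong refl) (simp add: \<chi>_mult)
  also have "\<dots> = (\<Sum>x\<in>?V. g x * (\<Sum>y\<in>?V. g y * (\<Sum>\<omega>\<in>?V. ?\<chi> \<omega> (bxor y (bxor x a))))) / (2 ^ N * 2 ^ N)"
    by (simp add: sum_distrib_left mult.assoc)
  also have "\<dots> = (\<Sum>x\<in>?V. g x * g (bxor x a) * 2 ^ N) / (2 ^ N * 2 ^ N)"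
    by (intro arg_cong[where f="\<lambda>s. s / _"] sum.cong refl) (simp add: collapse)
  also have "\<dots> = (\<Sum>x\<in>?V. g x * g (bxor x a)) * 2 ^ N / (2 ^ N * 2 ^ N)"
    by (simp add: sum_distrib_right)
  also have "\<dots> = (\<Sum>x\<in>?V. g x * g (bxor x a)) / 2 ^ N"
    by simp
  finally show ?thesis
    unfolding neg_one_pow_xor by (simp add: g_def mult.commute)
qed

lemma walsh_parseval: "(\<Sum>\<omega>\<in>vecs N. (walsh N f \<omega>)\<^sup>2) = 1"
proof -
  have zero: "replicate N False \<in> vecs N"
    by simp
  have "(\<Sum>\<omega>\<in>vecs N. (walsh N f \<omega>)\<^sup>2)
      = (\<Sum>\<omega>\<in>vecs N. (walsh N f \<omega>)\<^sup>2 * neg_one_pow (ip \<omega> (replicate N False)))"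
    by (simp add: ip_commute[of _ "replicate N False"] neg_one_pow_def)
  also have "\<dots> = (\<Sum>x\<in>vecs N. 1) / 2 ^ N"
    unfolding walsh_autocorrelation[OF zero]
    by (intro arg_cong[where f="\<lambda>s. s / 2 ^ N"] sum.cong) (auto simp: bxor_replicate_False neg_one_pow_def)
  also have "\<dots> = 1"
    by (simp add: card_vecs)
  finally show ?thesis .
qed

lemma pmf_BV: "pmf (BV N f) \<omega> = (if length \<omega> = N then (walsh N f \<omega>)\<^sup>2 else 0)"
  unfolding BV_def
proof (rule pmf_embed_pmf)
  have "(\<integral>\<^sup>+ \<omega>. ennreal (if length \<omega> = N then (walsh N f \<omega>)\<^sup>2 else 0) \<partial>count_space UNIV)
      = (\<Sum>\<omega>\<in>vecs N. ennreal ((walsh N f \<omega>)\<^sup>2))"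
    using finite_vecs[of N]
    by (subst nn_integral_count_space'[where A="vecs N"]) (auto intro!: sum.cong)
  also have "\<dots> = 1"
    by (simp add: walsh_parseval)
  finally show "(\<integral>\<^sup>+ \<omega>. ennreal (if length \<omega> = N then (walsh N f \<omega>)\<^sup>2 else 0) \<partial>count_space UNIV) = 1" .
qed simp

lemma measure_BV: "measure_pmf.prob (BV N f) A = (\<Sum>\<omega>\<in>vecs N \<inter> A. (walsh N f \<omega>)\<^sup>2)"
proof -
  have "measure_pmf.prob (BV N f) A = measure_pmf.prob (BV N f) (vecs N \<inter> A)"
    by (rule measure_prob_cong_0) (auto simp: pmf_BV)
  also have "\<dots> = (\<Sum>\<omega>\<in>vecs N \<inter> A. (walsh N f \<omega>)\<^sup>2)"
    by (subst measure_measure_pmf_finite) (simp, auto simp: pmf_BV intro!: sum.cong)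
  finally show ?thesis .
qed

lemma sum_filter_neq_neg_one_pow:
  assumes "finite V"
  shows "(\<Sum>x\<in>{x\<in>V. P x \<noteq> i}. w x)
       = ((\<Sum>x\<in>V. w x) - neg_one_pow i * (\<Sum>x\<in>V. w x * neg_one_pow (P x))) / 2"
proof -
  have split: "(\<Sum>x\<in>V. h x) = (\<Sum>x\<in>{x\<in>V. P x \<noteq> i}. h x) + (\<Sum>x\<in>{x\<in>V. P x = i}. h x)"
    for h :: "'a \<Rightarrow> real"
    using assms by (subst sum.union_disjoint[symmetric]) (auto intro: sum.cong)
  have "(\<Sum>x\<in>V. w x) = (\<Sum>x\<in>{x\<in>V. P x \<noteq> i}. w x) + (\<Sum>x\<in>{x\<in>V. P x = i}. w x)"
    by (rule split)
  moreover have "neg_one_pow i * (\<Sum>x\<in>V. w x * neg_one_pow (P x))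
      = (\<Sum>x\<in>V. w x * neg_one_pow (P x \<noteq> i))"
    unfolding neg_one_pow_xor by (simp add: sum_distrib_left mult_ac)
  moreover have "\<dots> = (\<Sum>x\<in>{x\<in>V. P x = i}. w x) - (\<Sum>x\<in>{x\<in>V. P x \<noteq> i}. w x)"
    by (subst split) (simp add: neg_one_pow_def sum_negf)
  ultimately show ?thesis
    by simp
qed

lemma prob_BV_ip_neq:
  assumes \<alpha>: "\<alpha> \<in> vecs N"
  shows "measure_pmf.prob (BV N f) {\<omega>. ip \<omega> \<alpha> \<noteq> i}
       = real (card {x\<in>vecs N. (f (bxor x \<alpha>) \<noteq> f x) \<noteq> i}) / 2 ^ N"
proof -
  let ?D = "\<lambda>x. f (bxor x \<alpha>) \<noteq> f x"
  let ?S = "\<Sum>x\<in>vecs N. neg_one_pow (?D x)"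
  have card_eq: "real (card {x\<in>vecs N. ?D x \<noteq> i}) = (2 ^ N - neg_one_pow i * ?S) / 2"
    using sum_filter_neq_neg_one_pow[OF finite_vecs[of N], where w="\<lambda>_. 1" and P="?D" and i=i]
    by (simp add: card_vecs)
  have "measure_pmf.prob (BV N f) {\<omega>. ip \<omega> \<alpha> \<noteq> i} = (\<Sum>\<omega>\<in>{\<omega>\<in>vecs N. ip \<omega> \<alpha> \<noteq> i}. (walsh N f \<omega>)\<^sup>2)"
    by (simp add: measure_BV Int_def)
  also have "\<dots> = (1 - neg_one_pow i * (?S / 2 ^ N)) / 2"
    unfolding sum_filter_neq_neg_one_pow[OF finite_vecs] walsh_parseval walsh_autocorrelation[OF \<alpha>] ..
  also have "\<dots> = real (card {x\<in>vecs N. ?D x \<noteq> i}) / 2 ^ N"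
    unfolding card_eq by (simp add: field_simps)
  finally show ?thesis .
qed

definition diff_miss_rate ::
    "nat \<Rightarrow> nat \<Rightarrow> (bool list \<Rightarrow> bool list \<Rightarrow> bool list) \<Rightarrow> nat \<Rightarrow> bool list \<Rightarrow> bool \<Rightarrow> real" where
  "diff_miss_rate n m F j a i =
     (\<Sum>k\<in>vecs m. real (card {x\<in>vecs n. (F (bxor x a) k ! j \<noteq> F x k ! j) \<noteq> i})) / 2 ^ (n + m)"

lemma prob_BV_comp_ip_take_neq:
  assumes a: "a \<in> vecs n"
  shows "measure_pmf.prob (BV (n + m) (comp n F j)) {\<omega>. ip a (take n \<omega>) \<noteq> i}
       = diff_miss_rate n m F j a i"
proof -
  let ?\<alpha> = "a @ replicate m False"
  have \<alpha>: "?\<alpha> \<in> vecs (n + m)"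
    using a by simp
  have "measure_pmf.prob (BV (n + m) (comp n F j)) {\<omega>. ip a (take n \<omega>) \<noteq> i}
      = measure_pmf.prob (BV (n + m) (comp n F j)) {\<omega>. ip \<omega> ?\<alpha> \<noteq> i}"
    unfolding measure_BV using a by (intro sum.cong) (auto simp: ip_take_eq_ip_pad)
  also have "\<dots> = real (card {z\<in>vecs (n + m). (comp n F j (bxor z ?\<alpha>) \<noteq> comp n F j z) \<noteq> i}) / 2 ^ (n + m)"
    by (rule prob_BV_ip_neq[OF \<alpha>])
  also have "\<dots> = diff_miss_rate n m F j a i"
    using a unfolding card_vecs_append of_nat_sum diff_miss_rate_def
    by (intro arg_cong[where f="\<lambda>s. s / _"] sum.cong refl arg_cong[where f="\<lambda>A. real (card A)"] Collect_cong)
      (auto simp: comp_def bxor_append_pad)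
  finally show ?thesis .
qed

lemma card_filter_add_card_filter_not:
  assumes "finite A"
  shows "real (card {x\<in>A. P x}) + real (card {x\<in>A. \<not> P x}) = real (card A)"
proof -
  have "card {x\<in>A. P x} + card {x\<in>A. \<not> P x} = card A"
    using assms by (subst card_Un_disjoint[symmetric]) (auto intro: arg_cong[where f=card])
  then show ?thesis
    by (metis of_nat_add)
qed

lemma card_below_threshold_ratio_gt:
  fixes g :: "'a \<Rightarrow> real"
  assumes "finite K" and q: "q > 0" and c: "c > 0" and g_nonneg: "\<And>k. k \<in> K \<Longrightarrow> 0 \<le> g k"
    and sum_less: "(\<Sum>k\<in>K. g k) < c * real (card K) / q"
  shows "real (card {k\<in>K. g k < c}) / real (card K) > 1 - 1 / q"
proof -
  let ?Bad = "{k\<in>K. \<not> g k < c}"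
  have "c * real (card ?Bad) = (\<Sum>k\<in>?Bad. c)"
    by simp
  also have "\<dots> \<le> (\<Sum>k\<in>?Bad. g k)"
    by (rule sum_mono) simp
  also have "\<dots> \<le> (\<Sum>k\<in>K. g k)"
    using assms by (intro sum_mono2) auto
  finally have "c * real (card ?Bad) < c * (real (card K) / q)"
    using sum_less by simp
  then have bad: "real (card ?Bad) < real (card K) / q"
    using c mult_less_cancel_left_pos by blast
  have "card K > 0"
    using sum_less \<open>finite K\<close> by (cases "K = {}") (auto simp: card_gt_0_iff)
  have "real (card {k\<in>K. g k < c}) + real (card ?Bad) = real (card K)"
    by (rule card_filter_add_card_filter_not[OF \<open>finite K\<close>])
  then have "real (card {k\<in>K. g k < c}) / real (card K) = 1 - real (card ?Bad) / real (card K)"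
    using \<open>card K > 0\<close> by (simp add: field_simps)
  moreover have "real (card ?Bad) / real (card K) < 1 / q"
    using bad \<open>card K > 0\<close> q by (simp add: field_simps)
  ultimately show ?thesis
    by linarith
qed

definition predicts :: "nat \<Rightarrow> nat set \<Rightarrow> bool option list \<Rightarrow> (nat \<Rightarrow> bool \<Rightarrow> bool) \<Rightarrow> bool" where
  "predicts n J b P \<longleftrightarrow> length b = n \<and>
     (\<forall>j<n. (j \<notin> J \<longrightarrow> b ! j = None) \<and> (j \<in> J \<longrightarrow> (\<exists>i. b ! j = Some i \<and> P j i)))"

lemma predicts_mono:
  "predicts n J b P \<Longrightarrow> (\<And>j i. j < n \<Longrightarrow> P j i \<Longrightarrow> Q j i) \<Longrightarrow> predicts n J b Q"
  unfolding predicts_def by blast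

lemma sum_card_mismatch_le:
  fixes F :: "bool list \<Rightarrow> bool list \<Rightarrow> bool list"
  assumes F_len: "\<And>x k. length x = n \<Longrightarrow> length k = m \<Longrightarrow> length (F x k) = n"
    and a: "a \<in> vecs n" and J: "finite J" and "length b = n"
    and b_None: "\<And>j. j < n \<Longrightarrow> j \<notin> J \<Longrightarrow> b ! j = None"
    and b_Some: "\<And>j. j \<in> J \<Longrightarrow> b ! j = Some (ii j)"
  shows "(\<Sum>k\<in>vecs m. real (card {x\<in>vecs n. \<not> matches (bxor (F (bxor x a) k) (F x k)) b}))
       \<le> (\<Sum>j\<in>J. diff_miss_rate n m F j a (ii j)) * 2 ^ (n + m)"
proof -
  define Y where "Y j k = {x\<in>vecs n. (F (bxor x a) k ! j \<noteq> F x k ! j) \<noteq> ii j}" for j k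
  have card_le: "card {x\<in>vecs n. \<not> matches (bxor (F (bxor x a) k) (F x k)) b} \<le> (\<Sum>j\<in>J. card (Y j k))"
    if k: "k \<in> vecs m" for k
  proof -
    have "{x\<in>vecs n. \<not> matches (bxor (F (bxor x a) k) (F x k)) b} \<subseteq> (\<Union>j\<in>J. Y j k)"
    proof
      fix x assume "x \<in> {x\<in>vecs n. \<not> matches (bxor (F (bxor x a) k) (F x k)) b}"
      then obtain j c where x: "x \<in> vecs n" and j: "j < n" and bj: "b ! j = Some c"
          and neq: "bxor (F (bxor x a) k) (F x k) ! j \<noteq> c"
        using \<open>length b = n\<close> unfolding matches_def by auto
      then have "j \<in> J" and "c = ii j"
        using b_None b_Some by fastforce+
      with x j neq k a show "x \<in> (\<Union>j\<in>J. Y j k)"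
        by (auto simp: Y_def nth_bxor F_len)
    qed
    moreover have "finite (Y j k)" for j
      by (rule finite_subset[OF _ finite_vecs[of n]]) (auto simp: Y_def)
    ultimately have "card {x\<in>vecs n. \<not> matches (bxor (F (bxor x a) k) (F x k)) b} \<le> card (\<Union>j\<in>J. Y j k)"
      using J by (intro card_mono) auto
    also have "\<dots> \<le> (\<Sum>j\<in>J. card (Y j k))"
      by (rule card_UN_le[OF J])
    finally show ?thesis .
  qed
  have "(\<Sum>k\<in>vecs m. real (card {x\<in>vecs n. \<not> matches (bxor (F (bxor x a) k) (F x k)) b}))
      \<le> (\<Sum>k\<in>vecs m. \<Sum>j\<in>J. real (card (Y j k)))"
  proof (rule sum_mono)
    fix k assume "k \<in> vecs m"
    from of_nat_mono[OF card_le[OF this], where 'a=real]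
    show "real (card {x\<in>vecs n. \<not> matches (bxor (F (bxor x a) k) (F x k)) b}) \<le> (\<Sum>j\<in>J. real (card (Y j k)))"
      by simp
  qed
  also have "\<dots> = (\<Sum>j\<in>J. diff_miss_rate n m F j a (ii j)) * 2 ^ (n + m)"
    by (subst sum.swap) (simp add: diff_miss_rate_def Y_def sum_divide_distrib[symmetric])
  finally show ?thesis .
qed

text \<open>Union bound over the predicted bits, then Markov's inequality over the keys.\<close>

lemma good_td_if_predicted_bits_reliable:
  fixes F :: "bool list \<Rightarrow> bool list \<Rightarrow> bool list"
  assumes F_len: "\<And>x k. length x = n \<Longrightarrow> length k = m \<Longrightarrow> length (F x k) = n"
    and q: "q > 0" and \<sigma>: "\<sigma> > 0" and n: "n > 0"
    and a: "a \<in> vecs n" and J: "J \<subseteq> {..<n}" "J \<noteq> {}"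
    and b: "predicts n J b (\<lambda>j i. diff_miss_rate n m F j a i < \<sigma> / (real n * q))"
  shows "good_td n m F q \<sigma> a b"
proof -
  define \<epsilon> where "\<epsilon> = \<sigma> / (real n * q)"
  define X where "X k = {x\<in>vecs n. \<not> matches (bxor (F (bxor x a) k) (F x k)) b}" for k
  obtain ii where ii: "\<And>j. j \<in> J \<Longrightarrow> b ! j = Some (ii j) \<and> diff_miss_rate n m F j a (ii j) < \<epsilon>"
    using b J unfolding predicts_def \<epsilon>_def by (metis lessThan_iff subsetD)
  have "finite J"
    using J finite_subset by blast
  have "length b = n" and "\<And>j. j < n \<Longrightarrow> j \<notin> J \<Longrightarrow> b ! j = None"
    using b unfolding predicts_def by blast+
  then have "(\<Sum>k\<in>vecs m. real (card (X k))) \<le> (\<Sum>j\<in>J. diff_miss_rate n m F j a (ii j)) * 2 ^ (n + m)"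
    unfolding X_def using ii by (intro sum_card_mismatch_le[OF F_len a \<open>finite J\<close>]) simp_all
  also have "\<dots> < (\<Sum>j\<in>J. \<epsilon>) * 2 ^ (n + m)"
    by (intro mult_strict_right_mono sum_strict_mono \<open>finite J\<close> J(2)) (simp_all add: ii)
  also have "\<dots> = real (card J) * \<epsilon> * 2 ^ (n + m)"
    by simp
  also have "\<dots> \<le> real n * \<epsilon> * 2 ^ (n + m)"
    using card_mono[OF _ J(1)] \<sigma> q by (intro mult_right_mono) (auto simp: \<epsilon>_def)
  also have "\<dots> = \<sigma> * 2 ^ n * real (card (vecs m)) / q"
    using n by (simp add: \<epsilon>_def card_vecs power_add)
  finally have K': "real (card {k\<in>vecs m. real (card (X k)) < \<sigma> * 2 ^ n}) / real (card (vecs m)) > 1 - 1 / q"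
    using q \<sigma> by (intro card_below_threshold_ratio_gt) auto
  have "real (card {x\<in>vecs n. matches (bxor (F (bxor x a) k) (F x k)) b}) / 2 ^ n > 1 - \<sigma>"
    if "real (card (X k)) < \<sigma> * 2 ^ n" for k
  proof -
    have "real (card {x\<in>vecs n. matches (bxor (F (bxor x a) k) (F x k)) b}) + real (card (X k)) = 2 ^ n"
      using card_filter_add_card_filter_not[OF finite_vecs] unfolding X_def by (simp add: card_vecs)
    then show ?thesis
      using that by (simp add: field_simps)
  qed
  with K' show ?thesis
    unfolding good_td_def by (intro exI[of _ "{k\<in>vecs m. real (card (X k)) < \<sigma> * 2 ^ n}"]) auto
qed

lemma alg2_output_predicts:
  assumes out: "alg2 n \<sigma> sel (Hset n p \<omega>) = Some (a, b)"
    and sel: "\<And>n t C. C \<noteq> {} \<Longrightarrow> sel n t C \<in> C"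
  shows "\<exists>J. J \<subseteq> {..<n} \<and> J \<noteq> {} \<and> a \<in> vecs n \<and>
           predicts n J b (\<lambda>j i. \<forall>t<p. ip a (take n (\<omega> (j, t))) = i)"
proof -
  define T where "T = {t \<in> {1..n}. 2 ^ t * (1 - \<sigma>) > (1::real) \<and> cands n (Hset n p \<omega>) t \<noteq> {}}"
  have "T \<noteq> {}" and ab: "(a, b) = sel n (Max T) (cands n (Hset n p \<omega>) (Max T))"
    using out unfolding alg2_def Let_def T_def[symmetric] by (auto split: if_splits)
  then have "Max T \<in> T"
    by (intro Max_in) (simp_all add: T_def)
  then have nonempty: "cands n (Hset n p \<omega>) (Max T) \<noteq> {}" and "Max T \<ge> 1"
    by (simp_all add: T_def)
  from sel[OF nonempty] have "(a, b) \<in> cands n (Hset n p \<omega>) (Max T)"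
    unfolding ab .
  then obtain J where J: "J \<subseteq> {..<n}" "card J = Max T" and a: "a \<in> vecs n" and "length b = n"
    and "\<forall>j<n. (j \<notin> J \<longrightarrow> b ! j = None) \<and>
                (j \<in> J \<longrightarrow> (\<exists>i. b ! j = Some i \<and> a \<in> Aset n (Hset n p \<omega> j) i))"
    unfolding cands_def by blast
  then have b: "predicts n J b (\<lambda>j i. a \<in> Aset n (Hset n p \<omega> j) i)"
    unfolding predicts_def by blast
  then have "predicts n J b (\<lambda>j i. \<forall>t<p. ip a (take n (\<omega> (j, t))) = i)"
    by (rule predicts_mono) (auto simp: Aset_def Hset_def)
  moreover have "J \<noteq> {}"
    using J \<open>Max T \<ge> 1\<close> by auto
  ultimately show ?thesis
    using J a by blast
qed

lemma prob_Pi_pmf_row: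
  fixes I :: "'i set"
  assumes "finite I" and "j \<in> I"
  shows "measure_pmf.prob (Pi_pmf (I \<times> {..<p}) dflt (\<lambda>(j, t). M j)) {\<omega>. \<forall>t<p. \<omega> (j, t) \<in> S}
       = measure_pmf.prob (M j) S ^ p"
proof -
  define B where "B x = (if fst x = j then S else UNIV)" for x :: "'i \<times> nat"
  have "{\<omega>. \<forall>t<p. \<omega> (j, t) \<in> S} = Pi (I \<times> {..<p}) B"
    using \<open>j \<in> I\<close> by (auto simp: B_def Pi_def)
  then have "measure_pmf.prob (Pi_pmf (I \<times> {..<p}) dflt (\<lambda>(j, t). M j)) {\<omega>. \<forall>t<p. \<omega> (j, t) \<in> S}
      = (\<Prod>j'\<in>I. \<Prod>t\<in>{..<p}. measure_pmf.prob (M j') (B (j', t)))"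
    using \<open>finite I\<close> by (simp add: measure_Pi_pmf_Pi prod.cartesian_product split_beta)
  also have "\<dots> = (\<Prod>j'\<in>I. if j' = j then measure_pmf.prob (M j) S ^ p else 1)"
    by (rule prod.cong) (auto simp: B_def)
  also have "\<dots> = measure_pmf.prob (M j) S ^ p"
    using assms by (simp add: prod.delta)
  finally show ?thesis .
qed

lemma prob_samples_consistent:
  assumes j: "j < n" and a: "a \<in> vecs n"
  shows "measure_pmf.prob (Pi_pmf ({..<n} \<times> {..<p}) [] (\<lambda>(j, t). BV (n + m) (comp n F j)))
           {\<omega>. \<forall>t<p. ip a (take n (\<omega> (j, t))) = i}
       = (1 - diff_miss_rate n m F j a i) ^ p"
proof -
  let ?M = "BV (n + m) (comp n F j)"
  have "measure_pmf.prob ?M {w. ip a (take n w) = i} = measure_pmf.prob ?M (UNIV - {w. ip a (take n w) \<noteq> i})"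
    by (intro arg_cong[where f="measure_pmf.prob ?M"]) auto
  also have "\<dots> = 1 - measure_pmf.prob ?M {w. ip a (take n w) \<noteq> i}"
    using measure_pmf.prob_compl[of "{w. ip a (take n w) \<noteq> i}" ?M] by simp
  also have "\<dots> = 1 - diff_miss_rate n m F j a i"
    by (simp only: prob_BV_comp_ip_take_neq[OF a])
  finally show ?thesis
    using prob_Pi_pmf_row[of "{..<n}" j p "[]" "\<lambda>j. BV (n + m) (comp n F j)" "{w. ip a (take n w) = i}"] j
    by simp
qed

lemma real_nruns_lower_bound:
  assumes q: "qn \<ge> 1" and \<sigma>: "0 < \<sigma>" "\<sigma> < 1" and n: "n > 0"
  shows "(real n)\<^sup>2 / 2 \<le> \<sigma> / (real n * qn) * real (nruns qn \<sigma> n)"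
proof -
  have "1 \<le> qn / \<sigma>"
    using q \<sigma> by (simp add: field_simps)
  then have "(real n)\<^sup>2 / 2 \<le> qn / \<sigma> * ((real n)\<^sup>2 / 2)"
    using mult_right_mono[of 1 "qn / \<sigma>" "(real n)\<^sup>2 / 2"] by simp
  also have "\<dots> = \<sigma> / (real n * qn) * (qn\<^sup>2 * real n ^ 3 / (2 * \<sigma>\<^sup>2))"
    using n \<sigma> q by (simp add: field_simps power2_eq_square power3_eq_cube)
  also have "\<dots> \<le> \<sigma> / (real n * qn) * real (nruns qn \<sigma> n)"
    unfolding nruns_def using \<sigma> q by (intro mult_left_mono real_nat_ceiling_ge) simp
  finally show ?thesis .
qed

lemma prob_samples_consistent_le:
  assumes j: "j < n" and a: "a \<in> vecs n" and miss: "\<epsilon> \<le> diff_miss_rate n m F j a i"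
  shows "measure_pmf.prob (Pi_pmf ({..<n} \<times> {..<p}) [] (\<lambda>(j, t). BV (n + m) (comp n F j)))
           {\<omega>. \<forall>t<p. ip a (take n (\<omega> (j, t))) = i}
       \<le> exp (- (\<epsilon> * real p))"
proof -
  let ?d = "diff_miss_rate n m F j a i"
  have "?d \<le> 1"
    using measure_pmf.prob_le_1 prob_BV_comp_ip_take_neq[OF a] by metis
  then have "(1 - ?d) ^ p \<le> exp (- ?d) ^ p"
    by (intro power_mono) (simp_all add: exp_ge_add_one_self[of "- ?d", simplified])
  also have "\<dots> = exp (- (?d * real p))"
    by (simp add: exp_of_nat_mult[symmetric] mult.commute)
  also have "\<dots> \<le> exp (- (\<epsilon> * real p))"
    using miss by (simp add: mult_right_mono)
  finally show ?thesis
    by (simp add: prob_samples_consistent[OF j a])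
qed

lemma alg2_wrong_output_confirms_unreliable_bit:
  fixes F :: "bool list \<Rightarrow> bool list \<Rightarrow> bool list"
  assumes F_len: "\<And>x k. length x = n \<Longrightarrow> length k = m \<Longrightarrow> length (F x k) = n"
    and q: "qn > 0" and \<sigma>: "\<sigma> > 0" and n: "n > 0"
    and sel: "\<And>n t C. C \<noteq> {} \<Longrightarrow> sel n t C \<in> C"
    and out: "alg2 n \<sigma> sel (Hset n p \<omega>) = Some (a, b)" and wrong: "\<not> good_td n m F qn \<sigma> a b"
  shows "a \<in> vecs n \<and> (\<exists>j<n. \<exists>i. \<sigma> / (real n * qn) \<le> diff_miss_rate n m F j a i
                                  \<and> (\<forall>t<p. ip a (take n (\<omega> (j, t))) = i))"
proof -
  obtain J where J: "J \<subseteq> {..<n}" "J \<noteq> {}" and a: "a \<in> vecs n"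
    and b: "predicts n J b (\<lambda>j i. \<forall>t<p. ip a (take n (\<omega> (j, t))) = i)"
    using alg2_output_predicts[OF out sel] by blast
  have "\<exists>j<n. \<exists>i. (\<forall>t<p. ip a (take n (\<omega> (j, t))) = i)
                  \<and> \<not> diff_miss_rate n m F j a i < \<sigma> / (real n * qn)"
  proof (rule ccontr)
    assume "\<not> ?thesis"
    then have "predicts n J b (\<lambda>j i. diff_miss_rate n m F j a i < \<sigma> / (real n * qn))"
      using b by (elim predicts_mono) blast
    with wrong show False
      using good_td_if_predicted_bits_reliable[where F=F and m=m, OF F_len q \<sigma> n a J] by blast
  qed
  with a show ?thesis
    by (auto simp: not_less)
qed

lemma good_td_if_q_lt_1: "q < 1 \<Longrightarrow> q > 0 \<Longrightarrow> good_td n m F q \<sigma> a b"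
  unfolding good_td_def by (intro exI[of _ "{}"]) (simp add: field_simps)

lemma prob_alg2_wrong_le:
  fixes F :: "bool list \<Rightarrow> bool list \<Rightarrow> bool list"
  assumes F_len: "\<And>x k. length x = n \<Longrightarrow> length k = m \<Longrightarrow> length (F x k) = n"
    and q: "qn > 0" and \<sigma>: "0 < \<sigma>" "\<sigma> < 1" and n: "n > 0"
    and sel: "\<And>n t C. C \<noteq> {} \<Longrightarrow> sel n t C \<in> C"
  shows "measure_pmf.prob (Pi_pmf ({..<n} \<times> {..<nruns qn \<sigma> n}) [] (\<lambda>(j, t). BV (n + m) (comp n F j)))
           {\<omega>. \<exists>a b. alg2 n \<sigma> sel (Hset n (nruns qn \<sigma> n) \<omega>) = Some (a, b) \<and> \<not> good_td n m F qn \<sigma> a b}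
         \<le> 2 * real n * 2 ^ n * exp (- (real n)\<^sup>2 / 2)"
    (is "measure_pmf.prob ?\<Omega> ?Wrong \<le> _")
proof (cases "qn < 1")
  case True
  have no_wrong: "?Wrong = {}"
    using good_td_if_q_lt_1[OF True q] by blast
  show ?thesis
    unfolding no_wrong by simp
next
  case False
  define p where "p = nruns qn \<sigma> n"
  define \<epsilon> where "\<epsilon> = \<sigma> / (real n * qn)"
  define E where "E s = {\<omega>. \<forall>t<p. ip (fst (snd s)) (take n (\<omega> (fst s, t))) = snd (snd s)}"
    for s :: "nat \<times> bool list \<times> bool"
  define S where "S = {(j, a, i) \<in> {..<n} \<times> vecs n \<times> UNIV. \<epsilon> \<le> diff_miss_rate n m F j a i}"
  have S_sub: "S \<subseteq> {..<n} \<times> vecs n \<times> UNIV"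
    by (auto simp: S_def)
  then have "finite S"
    by (rule finite_subset) simp
  have "?Wrong \<subseteq> (\<Union>s\<in>S. E s)"
  proof
    fix \<omega> assume "\<omega> \<in> ?Wrong"
    then obtain a b where "alg2 n \<sigma> sel (Hset n p \<omega>) = Some (a, b)" "\<not> good_td n m F qn \<sigma> a b"
      by (auto simp: p_def)
    then obtain j i where "j < n" "a \<in> vecs n" "\<epsilon> \<le> diff_miss_rate n m F j a i"
      "\<forall>t<p. ip a (take n (\<omega> (j, t))) = i"
      using alg2_wrong_output_confirms_unreliable_bit[where F=F and m=m and sel=sel, OF F_len q \<sigma>(1) n sel] unfolding \<epsilon>_def by blast
    then show "\<omega> \<in> (\<Union>s\<in>S. E s)"
      by (intro UN_I[of "(j, a, i)"]) (simp_all add: S_def E_def)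
  qed
  then have "measure_pmf.prob ?\<Omega> ?Wrong \<le> measure_pmf.prob ?\<Omega> (\<Union>s\<in>S. E s)"
    by (rule measure_pmf.finite_measure_mono) simp
  also have "\<dots> \<le> (\<Sum>s\<in>S. measure_pmf.prob ?\<Omega> (E s))"
    by (rule measure_pmf.finite_measure_subadditive_finite[OF \<open>finite S\<close>]) simp
  also have "\<dots> \<le> (\<Sum>s\<in>S. exp (- (real n)\<^sup>2 / 2))"
  proof (rule sum_mono)
    fix s assume "s \<in> S"
    then obtain j a i where "s = (j, a, i)" "j < n" "a \<in> vecs n" "\<epsilon> \<le> diff_miss_rate n m F j a i"
      by (auto simp: S_def)
    then have "measure_pmf.prob ?\<Omega> (E s) \<le> exp (- (\<epsilon> * real p))"
      unfolding E_def p_def by (simp add: prob_samples_consistent_le)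
    also have "\<dots> \<le> exp (- (real n)\<^sup>2 / 2)"
      using real_nruns_lower_bound[of qn \<sigma> n] False \<sigma> n by (simp add: \<epsilon>_def p_def)
    finally show "measure_pmf.prob ?\<Omega> (E s) \<le> exp (- (real n)\<^sup>2 / 2)" .
  qed
  also have "\<dots> \<le> 2 * real n * 2 ^ n * exp (- (real n)\<^sup>2 / 2)"
  proof -
    have "card S \<le> 2 * n * 2 ^ n"
      using card_mono[OF _ S_sub] by (simp add: card_cartesian_product card_vecs)
    then have "real (card S) \<le> 2 * real n * 2 ^ n"
      using of_nat_mono[where 'a=real] by fastforce
    then show ?thesis
      by (simp add: mult_right_mono)
  qed
  finally show ?thesis .
qed

lemma negligible_if_le_exp_square:
  assumes "\<And>n. n > 0 \<Longrightarrow> 0 \<le> f n \<and> f n \<le> 2 * real n * 2 ^ n * exp (- (real n)\<^sup>2 / 2)"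
  shows "negligible f"
  unfolding negligible_def
proof
  fix c :: nat
  have "((\<lambda>n. 2 * real n * 2 ^ n * exp (- (real n)\<^sup>2 / 2) * real n ^ c) \<longlongrightarrow> 0) sequentially"
    by real_asymp
  then have "\<forall>\<^sub>F n in sequentially. 2 * real n * 2 ^ n * exp (- (real n)\<^sup>2 / 2) * real n ^ c < 1"
    by (rule order_tendstoD) simp
  then show "\<forall>\<^sub>F n in sequentially. \<bar>f n\<bar> < 1 / real n ^ c"
    using eventually_gt_at_top[of 0]
  proof eventually_elim
    case (elim n)
    then have bound: "0 \<le> f n" "f n \<le> 2 * real n * 2 ^ n * exp (- (real n)\<^sup>2 / 2)"
      using assms by blast+
    then have "f n * real n ^ c < 1"
      using elim(1) mult_right_mono[OF bound(2), of "real n ^ c"] by simp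
    with bound(1) elim(2) show ?case
      by (simp add: field_simps)
  qed
qed

theorem theorem3:
  fixes F :: "nat \<Rightarrow> bool list \<Rightarrow> bool list \<Rightarrow> bool list"
    and m :: "nat \<Rightarrow> nat"
    and q :: "nat \<Rightarrow> real"
    and \<sigma> :: real
    and sel :: "nat \<Rightarrow> nat \<Rightarrow> (bool list \<times> bool option list) set \<Rightarrow> bool list \<times> bool option list"
  assumes F_len: "\<And>n x k. length x = n \<Longrightarrow> length k = m n \<Longrightarrow> length (F n x k) = n"
    and q_poly: "\<exists>Q :: real poly. \<forall>n. q n = poly Q (real n)"
    and q_pos: "\<And>n. q n > 0"
    and \<sigma>_pos: "0 < \<sigma>" and \<sigma>_lt1: "\<sigma> < 1"
    and sel: "\<And>n t C. C \<noteq> {} \<Longrightarrow> sel n t C \<in> C"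
  shows "negligible (\<lambda>n. measure_pmf.prob
            (Pi_pmf ({..<n} \<times> {..<nruns (q n) \<sigma> n}) []
               (\<lambda>(j, t). BV (n + m n) (comp n (F n) j)))
            {\<omega>. \<exists>a b. alg2 n \<sigma> sel (Hset n (nruns (q n) \<sigma> n) \<omega>) = Some (a, b)
                     \<and> \<not> good_td n (m n) (F n) (q n) \<sigma> a b})"
  by (intro negligible_if_le_exp_square conjI measure_nonneg prob_alg2_wrong_le F_len q_pos \<sigma>_pos \<sigma>_lt1 sel)

end
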